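(* Let $\mathcal{H}$ be a separable Hilbert space with orthonormal basis $\{|n\rangle : n\in\mathbb{N}_0=\{0,1,2,\dots\}\}$. Let $\mathsf{N}$ be the number observable on $\mathbb{N}_0$, $\mathsf{N}(\{n\})=|n\rangle\langle n|$, and let $\Phi$ be the canonical phase observable on $[0,2\pi)$, $$\Phi(X)=\sum_{m,n=0}^\infty\frac{1}{2\pi}\int_X e^{i(m-n)\theta}\,d\theta\,|m\rangle\langle n|$$ for Borel sets $X\subseteq[0,2\pi)$ (series converging weakly). Then $\mathsf{N}$ and $\Phi$ are maximally incompatible, i.e. $J(\Phi,\mathsf{N})=\{(\lambda,\mu)\in[0,1]^2:\lambda+\mu\leq 1\}$.
   Context: An observable on a Hilbert space $\mathcal{H}$ with outcome space $\Omega$ (a Borel subset of some $\mathbb{R}^n$) is a normalized positive operator valued measure (POVM) on the Borel sets of $\Omega$. An observable $\mathsf{T}$ is trivial if $\mathsf{T}(X)=\mu(X)I$ for some probability measure $\mu$. Two observables $\mathsf{M}_1,\mathsf{M}_2$ with outcome spaces $\Omega_1,\Omega_2$ are jointly measurable if there is an observable $\mathsf{M}$ on $\Omega_1\times\Omega_2$ with $\mathsf{M}(X\times\Omega_2)=\mathsf{M}_1(X)$ and $\mathsf{M}(\Omega_1\times Y)=\mathsf{M}_2(Y)$ for all Borel $X,Y$. The joint measurability region $J(\mathsf{M}_1,\mathsf{M}_2)$ is the set of $(\lambda,\mu)\in[0,1]\times[0,1]$ for which there exist trivial observables $\mathsf{T}_1$ on $\Omega_1$ and $\mathsf{T}_2$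 on $\Omega_2$ such that $\lambda\mathsf{M}_1+(1-\lambda)\mathsf{T}_1$ and $\mu\mathsf{M}_2+(1-\mu)\mathsf{T}_2$ are jointly measurable. A pair is maximally incompatible if its joint measurability region equals $\{(\lambda,\mu)\in[0,1]^2:\lambda+\mu\leq1\}$ (this condition is symmetric in the two observables). *)

theory Defs
  imports "HOL-Probability.Probability"
begin

text \<open>The Hilbert space is l2(N0) with orthonormal basis |n>, n::nat.
  A bounded operator A is represented by its matrix entries A m n = <m|A|n>.
  Finitely supported vectors are pairs (K, psi) with psi n irrelevant for n >= K.\<close>

type_synonym mat = "nat \<Rightarrow> nat \<Rightarrow> complex"

definition qform :: "nat \<Rightarrow> (nat \<Rightarrow> complex) \<Rightarrow> mat \<Rightarrow> complex" where
  "qform K \<psi> A = (\<Sum>m<K. \<Sum>n<K. cnj (\<psi> m) * A m n * \<psi> n)"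

definition idmat :: mat where
  "idmat = (\<lambda>m n. if m = n then 1 else 0)"

text \<open>A normalized POVM on the measurable space M: for every (finitely supported)
  vector psi, X \<mapsto> <psi|T(X)psi> is a (real, nonnegative) countably additive measure
  on the sets of M, and T(Omega) = I.\<close>

definition is_observable :: "'a measure \<Rightarrow> ('a set \<Rightarrow> mat) \<Rightarrow> bool" where
  "is_observable M T \<longleftrightarrow>
     (\<forall>K \<psi>. (\<forall>X\<in>sets M. qform K \<psi> (T X) \<in> \<real> \<and> 0 \<le> Re (qform K \<psi> (T X)))
        \<and> countably_additive (sets M) (\<lambda>X. ennreal (Re (qform K \<psi> (T X))))
        \<and> T (space M) = idmat)"

definition trivial_observable :: "'a measure \<Rightarrow> ('a set \<Rightarrow> mat) \<Rightarrow> bool" where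
  "trivial_observable M T \<longleftrightarrow> is_observable M T \<and>
     (\<exists>\<mu>. prob_space \<mu> \<and> sets \<mu> = sets M \<and>
        (\<forall>X\<in>sets M. T X = (\<lambda>m n. complex_of_real (measure \<mu> X) * idmat m n)))"

definition jointly_measurable ::
    "'a measure \<Rightarrow> 'b measure \<Rightarrow> ('a set \<Rightarrow> mat) \<Rightarrow> ('b set \<Rightarrow> mat) \<Rightarrow> bool" where
  "jointly_measurable M1 M2 A B \<longleftrightarrow>
     (\<exists>G. is_observable (M1 \<Otimes>\<^sub>M M2) G \<and>
        (\<forall>X\<in>sets M1. G (X \<times> space M2) = A X) \<and>
        (\<forall>Y\<in>sets M2. G (space M1 \<times> Y) = B Y))"

definition mix :: "real \<Rightarrow> ('a set \<Rightarrow> mat) \<Rightarrow> ('a set \<Rightarrow> mat) \<Rightarrow> ('a set \<Rightarrow> mat)" where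
  "mix l A T = (\<lambda>X m n. complex_of_real l * A X m n + complex_of_real (1 - l) * T X m n)"

definition jm_region ::
    "'a measure \<Rightarrow> 'b measure \<Rightarrow> ('a set \<Rightarrow> mat) \<Rightarrow> ('b set \<Rightarrow> mat) \<Rightarrow> (real \<times> real) set" where
  "jm_region M1 M2 A B = {(l, u). l \<in> {0..1} \<and> u \<in> {0..1} \<and>
     (\<exists>T1 T2. trivial_observable M1 T1 \<and> trivial_observable M2 T2 \<and>
        jointly_measurable M1 M2 (mix l A T1) (mix u B T2))}"

definition maximally_incompatible ::
    "'a measure \<Rightarrow> 'b measure \<Rightarrow> ('a set \<Rightarrow> mat) \<Rightarrow> ('b set \<Rightarrow> mat) \<Rightarrow> bool" where
  "maximally_incompatible M1 M2 A B \<longleftrightarrow>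
     jm_region M1 M2 A B = {(l, u). l \<in> {0..1} \<and> u \<in> {0..1} \<and> l + u \<le> 1}"

definition phase_space :: "real measure" where
  "phase_space = restrict_space borel {0..<2*pi}"

definition number_space :: "nat measure" where
  "number_space = count_space UNIV"

definition number_obs :: "nat set \<Rightarrow> mat" where
  "number_obs X = (\<lambda>m n. if m = n \<and> m \<in> X then 1 else 0)"

definition canonical_phase :: "real set \<Rightarrow> mat" where
  "canonical_phase X = (\<lambda>m n. complex_of_real (1 / (2*pi)) *
      (LINT \<theta>:X|lborel. cis ((real m - real n) * \<theta>)))"

end

theory Submission
  imports Defs
begin

text \<open>For \<open>\<lambda> + \<mu> \<le> 1\<close> a joint observable is obtained by randomisation: measure the phase with
  probability \<open>\<lambda>\<close> (reporting number 0), the number with probability \<open>\<mu>\<close> (reporting phase 0), and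
  otherwise report \<open>(0, 0)\<close>. Conversely, let \<open>G\<close> be a joint observable of
  \<open>\<lambda>\<Phi> + (1 - \<lambda>)T\<^sub>1\<close> and \<open>\<mu>N + (1 - \<mu>)T\<^sub>2\<close>. Among \<open>k\<close> arcs of length \<open>2\<pi>/k\<close> there is one, \<open>X\<close>, to
  which \<open>T\<^sub>1\<close> gives weight at most \<open>1/k\<close>, so that the phase marginal has diagonal entries
  \<open>a \<le> 1/k\<close> at \<open>X\<close>. Each cell \<open>G(X \<times> {n})\<close> lies below both marginals; splitting a unit vector
  \<open>\<psi>\<close> along \<open>|n\<rangle>\<close> and bounding the two parts by the phase and by the number marginal gives
  \<open>\<lambda>\<langle>\<psi>|\<Phi>(X)\<psi>\<rangle> \<le> a + 2\<surd>a + 1 - \<mu>\<close>. Coherent phase states centred in \<open>X\<close> make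
  \<open>\<langle>\<psi>|\<Phi>(X)\<psi>\<rangle>\<close> arbitrarily close to 1, hence \<open>\<lambda> + \<mu> - 1 \<le> 1/k + 2/\<surd>k\<close> for every \<open>k\<close>.\<close>

section \<open>Quadratic forms\<close>

lemma qform_add: "qform K \<psi> (\<lambda>m n. A m n + B m n) = qform K \<psi> A + qform K \<psi> B"
  unfolding qform_def by (simp add: algebra_simps sum.distrib)

lemma qform_cmult: "qform K \<psi> (\<lambda>m n. c * A m n) = c * qform K \<psi> A"
  unfolding qform_def by (simp add: algebra_simps sum_distrib_left)

lemma qform_diagonal:
  "qform K \<psi> (\<lambda>m n. if m = n then d m else 0) = (\<Sum>m<K. of_real ((cmod (\<psi> m))\<^sup>2) * d m)"
proof -
  have "qform K \<psi> (\<lambda>m n. if m = n then d m else 0)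
      = (\<Sum>m<K. \<Sum>n<K. if m = n then cnj (\<psi> m) * d m * \<psi> m else 0)"
    unfolding qform_def by (intro sum.cong refl) auto
  then show ?thesis by (simp add: complex_norm_square mult_ac del: of_real_power)
qed

lemma qform_idmat: "qform K \<psi> idmat = of_real (\<Sum>n<K. (cmod (\<psi> n))\<^sup>2)"
  using qform_diagonal[of K \<psi> "\<lambda>_. 1"] unfolding idmat_def by simp

lemma qform_number_obs:
  "qform K \<psi> (number_obs Y) = of_real (\<Sum>n\<in>{..<K} \<inter> Y. (cmod (\<psi> n))\<^sup>2)"
proof -
  have "number_obs Y = (\<lambda>m n. if m = n then (if m \<in> Y then 1 else 0) else 0)"
    unfolding number_obs_def by auto
  then have "qform K \<psi> (number_obs Y) = (\<Sum>n<K. of_real ((cmod (\<psi> n))\<^sup>2) * (if n \<in> Y then 1 else 0))"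
    by (simp only: qform_diagonal)
  also have "\<dots> = (\<Sum>n\<in>{..<K} \<inter> Y. of_real ((cmod (\<psi> n))\<^sup>2))"
    by (simp add: sum.inter_restrict if_distrib[where f="\<lambda>z. _ * z"] cong: if_cong del: of_real_power)
  finally show ?thesis by simp
qed

lemma qform_single:
  assumes "n < K"
  shows "qform K (\<lambda>k. if k = n then c else 0) A = of_real ((cmod c)\<^sup>2) * A n n"
proof -
  have "qform K (\<lambda>k. if k = n then c else 0) A
      = (\<Sum>m<K. if m = n then (\<Sum>k<K. if k = n then cnj c * A n n * c else 0) else 0)"
    unfolding qform_def by (intro sum.cong refl) (auto simp: if_distrib[of "\<lambda>z. _ * z"] cong: if_cong)
  then show ?thesis using assms by (simp add: complex_norm_square mult_ac del: of_real_power)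
qed

definition sesqform :: "nat \<Rightarrow> (nat \<Rightarrow> complex) \<Rightarrow> (nat \<Rightarrow> complex) \<Rightarrow> mat \<Rightarrow> complex" where
  "sesqform K x y A = (\<Sum>m<K. \<Sum>n<K. cnj (x m) * A m n * y n)"

lemma qform_add_vector:
  "qform K (\<lambda>n. x n + of_real t * y n) A =
     qform K x A + of_real t * (sesqform K x y A + sesqform K y x A) + of_real (t\<^sup>2) * qform K y A"
  unfolding qform_def sesqform_def
  by (simp add: algebra_simps sum.distrib sum_distrib_left power2_eq_square)

lemma linear_coeff_le_of_quadratic_nonneg:
  fixes a b c :: real
  assumes h: "\<And>t. 0 \<le> a + b * t + c * t\<^sup>2" and a: "0 \<le> a" and c: "0 \<le> c"
  shows "b \<le> 2 * sqrt a * sqrt c"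
proof -
  have "b\<^sup>2 \<le> 4 * a * c"
  proof (cases "c = 0")
    case True
    have "b = 0"
    proof (rule ccontr)
      assume "b \<noteq> 0"
      then have "a + b * (- (a + 1) / b) = -1" by (simp add: field_simps)
      then show False using h[of "- (a + 1) / b"] True by simp
    qed
    then show ?thesis using True by simp
  next
    case False
    then have "c > 0" using c by simp
    have "0 \<le> a + b * (- b / (2*c)) + c * (- b / (2*c))\<^sup>2" by (rule h)
    also have "\<dots> = a - b\<^sup>2 / (4 * c)" using \<open>c > 0\<close> by (simp add: field_simps power2_eq_square)
    finally show ?thesis using \<open>c > 0\<close> by (simp add: field_simps)
  qed
  then have "sqrt (b\<^sup>2) \<le> sqrt (4 * a * c)" by (rule real_sqrt_le_mono)
  then show ?thesis by (simp add: real_sqrt_mult)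
qed

lemma qform_triangle:
  assumes pos: "\<And>\<phi>. 0 \<le> Re (qform K \<phi> A)"
  shows "Re (qform K (\<lambda>n. x n + y n) A) \<le> (sqrt (Re (qform K x A)) + sqrt (Re (qform K y A)))\<^sup>2"
proof -
  let ?a = "Re (qform K x A)" and ?c = "Re (qform K y A)"
  let ?b = "Re (sesqform K x y A + sesqform K y x A)"
  have "0 \<le> ?a + ?b * t + ?c * t\<^sup>2" for t
    using pos[of "\<lambda>n. x n + of_real t * y n"] unfolding qform_add_vector
    by (simp add: mult.commute)
  then have b: "?b \<le> 2 * sqrt ?a * sqrt ?c"
    by (rule linear_coeff_le_of_quadratic_nonneg[OF _ pos pos])
  have "Re (qform K (\<lambda>n. x n + y n) A) = ?a + ?b + ?c"
    using qform_add_vector[of K x 1 y A] by simp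
  also have "\<dots> \<le> (sqrt ?a + sqrt ?c)\<^sup>2"
    using b pos[of x] pos[of y] by (simp add: power2_eq_square algebra_simps)
  finally show ?thesis .
qed

section \<open>Observables\<close>

lemma countably_additive_empty:
  fixes f :: "'a set \<Rightarrow> real"
  assumes ca: "countably_additive M (\<lambda>X. ennreal (f X))" and "{} \<in> M" and "0 \<le> f {}"
  shows "f {} = 0"
proof -
  have "(\<Sum>i::nat. ennreal (f {})) = ennreal (f {})"
    using ca \<open>{} \<in> M\<close> unfolding countably_additive_def by (auto simp: disjoint_family_on_def)
  then have "summable (\<lambda>_::nat. f {})"
    using \<open>0 \<le> f {}\<close> by (intro summable_suminf_not_top) auto
  then show ?thesis
    using summable_LIMSEQ_zero LIMSEQ_const_iff by blast
qed

lemma countably_additive_add: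
  fixes f g :: "'a set \<Rightarrow> ennreal"
  assumes "countably_additive M f" "countably_additive M g"
  shows "countably_additive M (\<lambda>X. f X + g X)"
proof (rule countably_additiveI)
  fix A :: "nat \<Rightarrow> 'a set"
  assume A: "range A \<subseteq> M" "disjoint_family A" "\<Union> (range A) \<in> M"
  have "(\<Sum>i. f (A i) + g (A i)) = (\<Sum>i. f (A i)) + (\<Sum>i. g (A i))"
    by (rule suminf_add[symmetric]) (rule summableI)+
  then show "(\<Sum>i. f (A i) + g (A i)) = f (\<Union> (range A)) + g (\<Union> (range A))"
    using assms A unfolding countably_additive_def by simp
qed

lemma countably_additive_cmult:
  fixes f :: "'a set \<Rightarrow> ennreal"
  assumes "countably_additive M f"
  shows "countably_additive M (\<lambda>X. c * f X)"
  using assms unfolding countably_additive_def by simp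

lemma countably_additive_sum:
  fixes f :: "'i \<Rightarrow> 'a set \<Rightarrow> ennreal"
  assumes "finite I" "\<And>i. i \<in> I \<Longrightarrow> countably_additive M (f i)"
  shows "countably_additive M (\<lambda>X. \<Sum>i\<in>I. f i X)"
  using assms
proof (induction I rule: finite_induct)
  case empty
  then show ?case unfolding countably_additive_def by simp
next
  case (insert i I)
  then show ?case by (simp add: countably_additive_add)
qed

lemma countably_additive_vimage:
  assumes ca: "countably_additive (sets M) f" and g: "g \<in> measurable M N"
  shows "countably_additive (sets N) (\<lambda>X. f (g -` X \<inter> space M))"
proof (rule countably_additiveI)
  fix A :: "nat \<Rightarrow> _"
  assume A: "range A \<subseteq> sets N" "disjoint_family A" "\<Union> (range A) \<in> sets N"
  let ?B = "\<lambda>i. g -` A i \<inter> space M"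
  have "range ?B \<subseteq> sets M" using A(1) measurable_sets[OF g] by blast
  moreover have "disjoint_family ?B" using A(2) unfolding disjoint_family_on_def by auto
  moreover have "\<Union> (range ?B) = g -` \<Union> (range A) \<inter> space M" by auto
  moreover have "g -` \<Union> (range A) \<inter> space M \<in> sets M" using measurable_sets[OF g A(3)] .
  ultimately show "(\<Sum>i. f (?B i)) = f (g -` \<Union> (range A) \<inter> space M)"
    using ca unfolding countably_additive_def by metis
qed

lemma countably_additive_cong:
  assumes "countably_additive M f" "\<And>X. X \<in> M \<Longrightarrow> f X = g X"
  shows "countably_additive M g"
proof (rule countably_additiveI)
  fix A :: "nat \<Rightarrow> _"
  assume A: "range A \<subseteq> M" "disjoint_family A" "\<Union> (range A) \<in> M"
  then have "(\<Sum>i. f (A i)) = f (\<Union> (range A))"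
    using assms(1) unfolding countably_additive_def by simp
  then show "(\<Sum>i. g (A i)) = g (\<Union> (range A))"
    using A assms(2) by (simp add: range_subsetD)
qed

lemma observable_qform_real:
  "is_observable M T \<Longrightarrow> X \<in> sets M \<Longrightarrow> qform K \<psi> (T X) = of_real (Re (qform K \<psi> (T X)))"
  unfolding is_observable_def by (auto simp: Reals_def)

lemma observable_qform_nonneg:
  "is_observable M T \<Longrightarrow> X \<in> sets M \<Longrightarrow> 0 \<le> Re (qform K \<psi> (T X))"
  unfolding is_observable_def by auto

text \<open>For a fixed vector an observable is a finite measure; this yields additivity and monotonicity
  of its quadratic forms from measure theory.\<close>

definition qform_measure :: "'a measure \<Rightarrow> ('a set \<Rightarrow> mat) \<Rightarrow> nat \<Rightarrow> (nat \<Rightarrow> complex) \<Rightarrow> 'a measure" where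
  "qform_measure M T K \<psi> = measure_of (space M) (sets M) (\<lambda>X. ennreal (Re (qform K \<psi> (T X))))"

lemma sets_qform_measure [simp]: "sets (qform_measure M T K \<psi>) = sets M"
  unfolding qform_measure_def by (simp add: sets.space_closed)

lemma space_qform_measure [simp]: "space (qform_measure M T K \<psi>) = space M"
  unfolding qform_measure_def by (simp add: sets.space_closed)

lemma emeasure_qform_measure:
  assumes obs: "is_observable M T" and X: "X \<in> sets M"
  shows "emeasure (qform_measure M T K \<psi>) X = ennreal (Re (qform K \<psi> (T X)))"
  unfolding qform_measure_def
proof (rule emeasure_measure_of_sigma[OF sets.sigma_algebra_axioms _ _ X])
  have ca: "countably_additive (sets M) (\<lambda>X. ennreal (Re (qform K \<psi> (T X))))"
    using obs unfolding is_observable_def by auto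
  then show "countably_additive (sets M) (\<lambda>X. ennreal (Re (qform K \<psi> (T X))))" .
  have "Re (qform K \<psi> (T {})) = 0"
    by (rule countably_additive_empty[OF ca]) (auto intro: observable_qform_nonneg[OF obs])
  then show "positive (sets M) (\<lambda>X. ennreal (Re (qform K \<psi> (T X))))"
    unfolding positive_def by simp
qed

lemma finite_measure_qform_measure:
  "is_observable M T \<Longrightarrow> finite_measure (qform_measure M T K \<psi>)"
  by (rule finite_measureI) (simp add: emeasure_qform_measure)

lemma measure_qform_measure:
  "is_observable M T \<Longrightarrow> X \<in> sets M \<Longrightarrow> measure (qform_measure M T K \<psi>) X = Re (qform K \<psi> (T X))"
  by (simp add: measure_def emeasure_qform_measure observable_qform_nonneg)

lemma observable_qform_mono:
  assumes "is_observable M T" "X \<in> sets M" "Y \<in> sets M" "X \<subseteq> Y"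
  shows "Re (qform K \<psi> (T X)) \<le> Re (qform K \<psi> (T Y))"
  using finite_measure.finite_measure_mono[OF finite_measure_qform_measure[OF assms(1), of K \<psi>], of X Y] assms
  by (simp add: measure_qform_measure)

lemma observable_qform_Un:
  assumes "is_observable M T" "X \<in> sets M" "Y \<in> sets M" "X \<inter> Y = {}"
  shows "Re (qform K \<psi> (T (X \<union> Y))) = Re (qform K \<psi> (T X)) + Re (qform K \<psi> (T Y))"
  using finite_measure.finite_measure_Union[OF finite_measure_qform_measure[OF assms(1), of K \<psi>], of X Y] assms
  by (simp add: measure_qform_measure)

lemma observable_qform_UN:
  assumes "is_observable M T" "finite I" "A ` I \<subseteq> sets M" "disjoint_family_on A I"
  shows "Re (qform K \<psi> (T (\<Union>i\<in>I. A i))) = (\<Sum>i\<in>I. Re (qform K \<psi> (T (A i))))"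
  using finite_measure.finite_measure_finite_Union[OF finite_measure_qform_measure[OF assms(1), of K \<psi>], of I A] assms
  by (simp add: measure_qform_measure image_subset_iff sets.finite_UN)

definition scalar_obs :: "'a measure \<Rightarrow> 'a set \<Rightarrow> mat" where
  "scalar_obs \<mu> X = (\<lambda>m n. of_real (measure \<mu> X) * idmat m n)"

lemma qform_scalar_obs:
  "qform K \<psi> (scalar_obs \<mu> X) = of_real (measure \<mu> X * (\<Sum>n<K. (cmod (\<psi> n))\<^sup>2))"
  unfolding scalar_obs_def by (simp add: qform_cmult qform_idmat)

lemma Re_qform_mix_scalar_obs:
  "Re (qform K \<psi> (mix l A (scalar_obs \<mu>) X))
     = l * Re (qform K \<psi> (A X)) + (1 - l) * measure \<mu> X * (\<Sum>n<K. (cmod (\<psi> n))\<^sup>2)"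
  unfolding mix_def by (simp add: qform_add qform_cmult qform_scalar_obs)

lemma trivial_observable_scalar_obs:
  assumes P: "prob_space \<mu>" and S: "sets \<mu> = sets M"
  shows "trivial_observable M (scalar_obs \<mu>)"
  unfolding trivial_observable_def
proof (intro conjI exI ballI)
  show "prob_space \<mu>" "sets \<mu> = sets M" by fact+
  show "scalar_obs \<mu> X = (\<lambda>m n. of_real (measure \<mu> X) * idmat m n)" for X
    by (simp add: scalar_obs_def)
  show "is_observable M (scalar_obs \<mu>)"
    unfolding is_observable_def
  proof (intro allI conjI ballI)
    fix K :: nat and \<psi> :: "nat \<Rightarrow> complex" and X
    let ?n = "\<Sum>n<K. (cmod (\<psi> n))\<^sup>2"
    show "qform K \<psi> (scalar_obs \<mu> X) \<in> \<real>" "0 \<le> Re (qform K \<psi> (scalar_obs \<mu> X))"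
      by (simp_all add: qform_scalar_obs sum_nonneg)
    have "ennreal (Re (qform K \<psi> (scalar_obs \<mu> X))) = ennreal ?n * emeasure \<mu> X" for X
      using finite_measure.emeasure_eq_measure[OF prob_space.finite_measure[OF P]]
      by (simp add: qform_scalar_obs ennreal_mult sum_nonneg mult.commute)
    then show "countably_additive (sets M) (\<lambda>X. ennreal (Re (qform K \<psi> (scalar_obs \<mu> X))))"
      using emeasure_countably_additive[of \<mu>] S by (simp add: countably_additive_cmult)
    have "space \<mu> = space M" using S by (rule sets_eq_imp_space_eq)
    then show "scalar_obs \<mu> (space M) = idmat"
      using prob_space.prob_space[OF P] by (simp add: scalar_obs_def)
  qed
qed

section \<open>The number and phase observables\<close>

lemma space_number_space [simp]: "space number_space = UNIV"
  and sets_number_space [simp]: "sets number_space = UNIV"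
  unfolding number_space_def by simp_all

lemma number_observable: "is_observable number_space number_obs"
  unfolding is_observable_def
proof (intro allI conjI ballI)
  fix K :: nat and \<psi> :: "nat \<Rightarrow> complex" and Y
  show "qform K \<psi> (number_obs Y) \<in> \<real>" "0 \<le> Re (qform K \<psi> (number_obs Y))"
    by (simp_all add: qform_number_obs sum_nonneg)
next
  fix K :: nat and \<psi> :: "nat \<Rightarrow> complex"
  show "number_obs (space number_space) = idmat"
    unfolding number_obs_def idmat_def by auto
  have "ennreal (Re (qform K \<psi> (number_obs Y)))
      = (\<Sum>n<K. ennreal ((cmod (\<psi> n))\<^sup>2) * emeasure (return number_space n) Y)" for Y
  proof -
    have "(\<Sum>n\<in>{..<K} \<inter> Y. (cmod (\<psi> n))\<^sup>2) = (\<Sum>n<K. (cmod (\<psi> n))\<^sup>2 * indicator Y n)"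
      by (simp add: sum.inter_restrict indicator_def if_distrib cong: if_cong)
    then show ?thesis
      by (simp add: qform_number_obs sum_ennreal[symmetric] ennreal_mult del: sum_ennreal)
  qed
  then show "countably_additive (sets number_space) (\<lambda>Y. ennreal (Re (qform K \<psi> (number_obs Y))))"
    using emeasure_countably_additive[of "return number_space _"]
    by (simp add: countably_additive_sum countably_additive_cmult del: sets_number_space)
qed

lemma set_integral_sum:
  fixes f :: "'i \<Rightarrow> 'a \<Rightarrow> 'b::{banach, second_countable_topology}"
  assumes "finite I" "\<And>i. i \<in> I \<Longrightarrow> set_integrable M A (f i)"
  shows "(LINT x:A|M. (\<Sum>i\<in>I. f i x)) = (\<Sum>i\<in>I. LINT x:A|M. f i x)"
  using assms unfolding set_lebesgue_integral_def set_integrable_def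
  by (simp only: scaleR_sum_right Bochner_Integration.integral_sum[where f="\<lambda>i x. indicator A x *\<^sub>R f i x"])

lemma set_integrable_sum:
  fixes f :: "'i \<Rightarrow> 'a \<Rightarrow> 'b::{banach, second_countable_topology}"
  assumes "finite I" "\<And>i. i \<in> I \<Longrightarrow> set_integrable M A (f i)"
  shows "set_integrable M A (\<lambda>x. \<Sum>i\<in>I. f i x)"
  using assms unfolding set_integrable_def
  by (simp only: scaleR_sum_right Bochner_Integration.integrable_sum[where f="\<lambda>i x. indicator A x *\<^sub>R f i x"])

lemma set_nn_integral_eq_set_integral:
  fixes h :: "'a \<Rightarrow> real"
  assumes "set_integrable M X h" "\<And>x. 0 \<le> h x"
  shows "(\<integral>\<^sup>+ x. ennreal (h x) * indicator X x \<partial>M) = ennreal (LINT x:X|M. h x)"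
proof -
  have "(\<lambda>x. ennreal (h x) * indicator X x) = (\<lambda>x. ennreal (indicator X x *\<^sub>R h x))"
    by (auto simp: indicator_def)
  then show ?thesis
    using assms unfolding set_integrable_def set_lebesgue_integral_def
    by (simp add: nn_integral_eq_integral)
qed

lemma continuous_on_set_integrable:
  fixes g :: "real \<Rightarrow> 'b::{banach, second_countable_topology}"
  assumes "continuous_on UNIV g" "X \<in> sets borel" "X \<subseteq> {a..b}"
  shows "set_integrable lborel X g"
  by (rule set_integrable_subset[OF borel_integrable_atLeastAtMost'])
     (use assms in \<open>auto intro: continuous_on_subset\<close>)

lemma space_phase_space: "space phase_space = {0..<2*pi}"
  unfolding phase_space_def by (simp add: space_restrict_space)

lemma sets_phase_space: "X \<in> sets phase_space \<longleftrightarrow> X \<in> sets borel \<and> X \<subseteq> {0..<2*pi}"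
  unfolding phase_space_def by (subst sets_restrict_space_iff) auto

lemma lborel_phase_space_finite: "X \<in> sets phase_space \<Longrightarrow> emeasure lborel X \<noteq> \<infinity>"
  using emeasure_mono[of X "{0..<2*pi}" lborel] unfolding sets_phase_space
  by (auto simp: top_unique)

definition phase_amplitude :: "nat \<Rightarrow> (nat \<Rightarrow> complex) \<Rightarrow> real \<Rightarrow> complex" where
  "phase_amplitude K \<psi> \<theta> = (\<Sum>n<K. \<psi> n * cis (- (real n * \<theta>)))"

definition phase_density :: "nat \<Rightarrow> (nat \<Rightarrow> complex) \<Rightarrow> real \<Rightarrow> real" where
  "phase_density K \<psi> \<theta> = (cmod (phase_amplitude K \<psi> \<theta>))\<^sup>2 / (2*pi)"

lemma phase_density_nonneg: "0 \<le> phase_density K \<psi> \<theta>"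
  unfolding phase_density_def by simp

lemma continuous_phase_density: "continuous_on UNIV (phase_density K \<psi>)"
  unfolding phase_density_def phase_amplitude_def by (intro continuous_intros) auto

lemma set_integrable_phase_density:
  "X \<in> sets phase_space \<Longrightarrow> set_integrable lborel X (phase_density K \<psi>)"
  unfolding sets_phase_space
  by (intro continuous_on_set_integrable[OF continuous_phase_density, where a=0 and b="2*pi"]) auto

lemma cnj_phase_amplitude_mult:
  "cnj (phase_amplitude K \<psi> \<theta>) * phase_amplitude K \<psi> \<theta>
     = (\<Sum>m<K. \<Sum>n<K. cnj (\<psi> m) * cis ((real m - real n) * \<theta>) * \<psi> n)"
proof -
  have "cnj (phase_amplitude K \<psi> \<theta>) * phase_amplitude K \<psi> \<theta>
      = (\<Sum>m<K. \<Sum>n<K. cnj (\<psi> m * cis (- (real m * \<theta>))) * (\<psi> n * cis (- (real n * \<theta>))))"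
    unfolding phase_amplitude_def cnj_sum sum_distrib_right sum_distrib_left by (rule sum.swap)
  also have "\<dots> = (\<Sum>m<K. \<Sum>n<K. cnj (\<psi> m) * cis ((real m - real n) * \<theta>) * \<psi> n)"
    by (intro sum.cong refl) (simp add: cis_cnj cis_mult algebra_simps)
  finally show ?thesis .
qed

lemma qform_canonical_phase:
  assumes X: "X \<in> sets phase_space"
  shows "qform K \<psi> (canonical_phase X) = of_real (LINT \<theta>:X|lborel. phase_density K \<psi> \<theta>)"
proof -
  let ?f = "\<lambda>m n \<theta>. cnj (\<psi> m) * cis ((real m - real n) * \<theta>) * \<psi> n"
  have int: "set_integrable lborel X (?f m n)" for m n
    using X unfolding sets_phase_space
    by (intro continuous_on_set_integrable[where a=0 and b="2*pi"]) (auto intro!: continuous_intros)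
  have "qform K \<psi> (canonical_phase X) = (\<Sum>m<K. \<Sum>n<K. LINT \<theta>:X|lborel. ?f m n \<theta>) / (2*pi)"
    unfolding qform_def canonical_phase_def
    by (simp add: sum_divide_distrib mult.commute mult.left_commute)
  also have "\<dots> = (LINT \<theta>:X|lborel. (\<Sum>m<K. \<Sum>n<K. ?f m n \<theta>)) / (2*pi)"
    using int by (simp add: set_integral_sum set_integrable_sum)
  also have "\<dots> = (LINT \<theta>:X|lborel. complex_of_real ((cmod (phase_amplitude K \<psi> \<theta>))\<^sup>2)) / (2*pi)"
    by (metis cnj_phase_amplitude_mult complex_norm_square mult.commute)
  also have "\<dots> = of_real (LINT \<theta>:X|lborel. phase_density K \<psi> \<theta>)"
    unfolding phase_density_def by (simp add: set_integral_complex_of_real set_integral_divide_zero del: of_real_power)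
  finally show ?thesis .
qed

lemma integral_cis_period:
  fixes d :: int
  shows "(LINT \<theta>:{0..<2*pi}|lborel. cis (real_of_int d * \<theta>)) = (if d = 0 then 2*pi else 0)"
proof (cases "d = 0")
  case True
  then show ?thesis by (simp add: set_integral_const scaleR_conv_of_real)
next
  case False
  let ?F = "\<lambda>\<theta>. cis (real_of_int d * \<theta>) / (\<i> * of_int d)"
  have "(LBINT \<theta>=(0::real)..2*pi. cis (real_of_int d * \<theta>)) = ?F (2*pi) - ?F 0"
    using False
    by (intro interval_integral_FTC_finite continuous_intros)
       (auto intro!: derivative_eq_intros simp: has_vector_derivative_def field_simps scaleR_conv_of_real)
  moreover have "cis (real_of_int d * (2*pi)) = 1"
    using cis_multiple_2pi[of "real_of_int d"] by (simp add: mult.commute)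
  ultimately show ?thesis
    using False by (simp add: interval_integral_Ico)
qed

lemma canonical_phase_space: "canonical_phase (space phase_space) = idmat"
proof (intro ext)
  fix m n :: nat
  have "real m - real n = real_of_int (int m - int n)" by simp
  then show "canonical_phase (space phase_space) m n = idmat m n"
    unfolding canonical_phase_def idmat_def space_phase_space
    by (simp only: integral_cis_period) auto
qed

lemma canonical_phase_diag:
  "X \<in> sets phase_space \<Longrightarrow> Re (canonical_phase X n n) = measure lborel X / (2*pi)"
  unfolding canonical_phase_def using lborel_phase_space_finite[of X]
  by (simp add: set_integral_const sets_phase_space scaleR_conv_of_real)

lemma canonical_phase_empty: "canonical_phase {} = (\<lambda>m n. 0)"
  unfolding canonical_phase_def set_lebesgue_integral_def by simp

lemma phase_observable: "is_observable phase_space canonical_phase"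
  unfolding is_observable_def
proof (intro allI conjI ballI)
  fix K \<psi> X
  assume "X \<in> sets phase_space"
  then show "qform K \<psi> (canonical_phase X) \<in> \<real>" "0 \<le> Re (qform K \<psi> (canonical_phase X))"
    by (simp_all add: qform_canonical_phase set_lebesgue_integral_def phase_density_nonneg)
next
  fix K \<psi>
  show "canonical_phase (space phase_space) = idmat" by (rule canonical_phase_space)
  let ?D = "density lborel (\<lambda>\<theta>. ennreal (phase_density K \<psi> \<theta>))"
  have "ennreal (Re (qform K \<psi> (canonical_phase X))) = emeasure ?D X" if X: "X \<in> sets phase_space" for X
    using X borel_measurable_continuous_onI[OF continuous_phase_density]
    by (simp add: qform_canonical_phase emeasure_density sets_phase_space phase_density_nonneg
        set_nn_integral_eq_set_integral[OF set_integrable_phase_density])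
  moreover have "sets phase_space \<subseteq> sets ?D"
    by (auto simp: sets_phase_space)
  ultimately show "countably_additive (sets phase_space) (\<lambda>X. ennreal (Re (qform K \<psi> (canonical_phase X))))"
    using emeasure_countably_additive[of ?D] unfolding countably_additive_def
    by (simp add: subset_eq)
qed

section \<open>Joint measurability below the diagonal\<close>

definition phase_slice :: "(real \<times> nat) set \<Rightarrow> real set" where
  "phase_slice Z = (\<lambda>\<theta>. (\<theta>, 0)) -` Z \<inter> space phase_space"

definition number_slice :: "(real \<times> nat) set \<Rightarrow> nat set" where
  "number_slice Z = (\<lambda>n. (0, n)) -` Z \<inter> space number_space"

definition phase_number_joint :: "real \<Rightarrow> real \<Rightarrow> (real \<times> nat) set \<Rightarrow> mat" where
  "phase_number_joint l u Z = (\<lambda>m n. of_real l * canonical_phase (phase_slice Z) m n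
      + of_real u * number_obs (number_slice Z) m n + of_real ((1 - l - u) * indicator Z (0, 0)) * idmat m n)"

lemma zero_in_space_phase_space: "0 \<in> space phase_space"
  by (simp add: space_phase_space)

lemma measurable_phase_embedding:
  "(\<lambda>\<theta>. (\<theta>, 0::nat)) \<in> measurable phase_space (phase_space \<Otimes>\<^sub>M number_space)"
  by measurable

lemma measurable_number_embedding:
  "(\<lambda>n. (0::real, n)) \<in> measurable number_space (phase_space \<Otimes>\<^sub>M number_space)"
  by (rule measurable_Pair[OF measurable_const measurable_ident_sets[OF refl]])
     (rule zero_in_space_phase_space)

lemma phase_slice_sets: "Z \<in> sets (phase_space \<Otimes>\<^sub>M number_space) \<Longrightarrow> phase_slice Z \<in> sets phase_space"
  unfolding phase_slice_def by (rule measurable_sets[OF measurable_phase_embedding])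

lemma number_slice_sets: "Z \<in> sets (phase_space \<Otimes>\<^sub>M number_space) \<Longrightarrow> number_slice Z \<in> sets number_space"
  by simp

lemma qform_phase_number_joint:
  assumes Z: "Z \<in> sets (phase_space \<Otimes>\<^sub>M number_space)"
  shows "qform K \<psi> (phase_number_joint l u Z) = of_real
    (l * Re (qform K \<psi> (canonical_phase (phase_slice Z))) + u * Re (qform K \<psi> (number_obs (number_slice Z)))
      + (1 - l - u) * indicator Z (0, 0) * (\<Sum>n<K. (cmod (\<psi> n))\<^sup>2))"
  unfolding phase_number_joint_def
  using observable_qform_real[OF phase_observable phase_slice_sets[OF Z]]
    observable_qform_real[OF number_observable number_slice_sets[OF Z]]
  by (simp add: qform_add qform_cmult qform_idmat)

lemma countably_additive_qform_phase_number_joint: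
  assumes l: "0 \<le> l" and u: "0 \<le> u" and lu: "l + u \<le> 1"
  shows "countably_additive (sets (phase_space \<Otimes>\<^sub>M number_space))
    (\<lambda>Z. ennreal (Re (qform K \<psi> (phase_number_joint l u Z))))"
proof -
  let ?P = "phase_space \<Otimes>\<^sub>M number_space"
  let ?n = "\<Sum>n<K. (cmod (\<psi> n))\<^sup>2"
  let ?f1 = "\<lambda>X. ennreal (Re (qform K \<psi> (canonical_phase X)))"
  let ?f2 = "\<lambda>Y. ennreal (Re (qform K \<psi> (number_obs Y)))"
  have "countably_additive (sets ?P) (\<lambda>Z. ?f1 (phase_slice Z))"
    unfolding phase_slice_def
    by (rule countably_additive_vimage[OF _ measurable_phase_embedding])
       (use phase_observable in \<open>simp add: is_observable_def\<close>)
  moreover have "countably_additive (sets ?P) (\<lambda>Z. ?f2 (number_slice Z))"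
    unfolding number_slice_def
    by (rule countably_additive_vimage[OF _ measurable_number_embedding])
       (use number_observable in \<open>simp add: is_observable_def\<close>)
  moreover have "countably_additive (sets ?P) (emeasure (return ?P (0, 0)))"
    using emeasure_countably_additive[of "return ?P (0, 0)"] by simp
  ultimately have "countably_additive (sets ?P)
      (\<lambda>Z. ennreal l * ?f1 (phase_slice Z) + ennreal u * ?f2 (number_slice Z)
         + ennreal ((1 - l - u) * ?n) * emeasure (return ?P (0, 0)) Z)"
    by (intro countably_additive_add countably_additive_cmult)
  then show ?thesis
  proof (rule countably_additive_cong)
    fix Z assume Z: "Z \<in> sets ?P"
    have "0 \<le> Re (qform K \<psi> (canonical_phase (phase_slice Z)))"
      by (rule observable_qform_nonneg[OF phase_observable phase_slice_sets[OF Z]])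
    moreover have "0 \<le> Re (qform K \<psi> (number_obs (number_slice Z)))"
      by (rule observable_qform_nonneg[OF number_observable number_slice_sets[OF Z]])
    moreover have "0 \<le> (1 - l - u) * indicator Z (0, 0) * ?n"
      using lu by (simp add: sum_nonneg)
    ultimately show "ennreal l * ?f1 (phase_slice Z) + ennreal u * ?f2 (number_slice Z)
        + ennreal ((1 - l - u) * ?n) * emeasure (return ?P (0, 0)) Z
      = ennreal (Re (qform K \<psi> (phase_number_joint l u Z)))"
      unfolding qform_phase_number_joint[OF Z] using l u lu Z
      by (simp add: ennreal_plus[symmetric] ennreal_mult[symmetric] indicator_def sum_nonneg
          del: ennreal_plus)
  qed
qed

lemma phase_number_joint_observable:
  assumes l: "0 \<le> l" and u: "0 \<le> u" and lu: "l + u \<le> 1"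
  shows "is_observable (phase_space \<Otimes>\<^sub>M number_space) (phase_number_joint l u)"
  unfolding is_observable_def
proof (intro allI conjI ballI)
  fix K :: nat and \<psi> :: "nat \<Rightarrow> complex" and Z
  assume Z: "Z \<in> sets (phase_space \<Otimes>\<^sub>M number_space)"
  show "qform K \<psi> (phase_number_joint l u Z) \<in> \<real>"
    by (simp add: qform_phase_number_joint[OF Z])
  show "0 \<le> Re (qform K \<psi> (phase_number_joint l u Z))"
    unfolding qform_phase_number_joint[OF Z] Re_complex_of_real
    using observable_qform_nonneg[OF phase_observable phase_slice_sets[OF Z]]
      observable_qform_nonneg[OF number_observable number_slice_sets[OF Z]] l u lu
    by (simp add: sum_nonneg)
next
  fix K :: nat and \<psi> :: "nat \<Rightarrow> complex"
  show "countably_additive (sets (phase_space \<Otimes>\<^sub>M number_space))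
      (\<lambda>Z. ennreal (Re (qform K \<psi> (phase_number_joint l u Z))))"
    using l u lu by (rule countably_additive_qform_phase_number_joint)
  let ?P = "phase_space \<Otimes>\<^sub>M number_space"
  have "phase_slice (space ?P) = space phase_space" "number_slice (space ?P) = UNIV"
    "(0, 0) \<in> space ?P"
    unfolding phase_slice_def number_slice_def
    by (auto simp: space_pair_measure zero_in_space_phase_space)
  then show "phase_number_joint l u (space ?P) = idmat"
    unfolding phase_number_joint_def
    by (intro ext) (simp add: canonical_phase_space number_obs_def idmat_def algebra_simps)
qed

lemma phase_number_joint_phase_marginal:
  assumes X: "X \<in> sets phase_space"
  shows "phase_number_joint l u (X \<times> space number_space)
    = mix l canonical_phase (scalar_obs (return phase_space 0)) X"
proof -
  have "phase_slice (X \<times> space number_space) = X"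
    using sets.sets_into_space[OF X] by (auto simp: phase_slice_def)
  moreover have "number_slice (X \<times> space number_space) = (if 0 \<in> X then UNIV else {})"
    by (auto simp: number_slice_def)
  ultimately show ?thesis
    using X unfolding phase_number_joint_def mix_def scalar_obs_def
    by (intro ext) (auto simp: number_obs_def idmat_def measure_return indicator_def algebra_simps)
qed

lemma phase_number_joint_number_marginal:
  "phase_number_joint l u (space phase_space \<times> Y) = mix u number_obs (scalar_obs (return number_space 0)) Y"
proof -
  have "phase_slice (space phase_space \<times> Y) = (if 0 \<in> Y then space phase_space else {})"
    by (auto simp: phase_slice_def)
  moreover have "number_slice (space phase_space \<times> Y) = Y"
    by (auto simp: number_slice_def zero_in_space_phase_space)
  ultimately show ?thesis
    unfolding phase_number_joint_def mix_def scalar_obs_def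
    by (intro ext) (auto simp: canonical_phase_space canonical_phase_empty idmat_def measure_return
        zero_in_space_phase_space indicator_def algebra_simps)
qed

lemma region_contains_triangle:
  assumes l: "0 \<le> l" "l \<le> 1" and u: "0 \<le> u" "u \<le> 1" and lu: "l + u \<le> 1"
  shows "(l, u) \<in> jm_region phase_space number_space canonical_phase number_obs"
proof -
  let ?\<mu> = "return phase_space 0" and ?\<nu> = "return number_space (0::nat)"
  have "jointly_measurable phase_space number_space
      (mix l canonical_phase (scalar_obs ?\<mu>)) (mix u number_obs (scalar_obs ?\<nu>))"
    unfolding jointly_measurable_def
    using phase_number_joint_observable[OF l(1) u(1) lu]
      phase_number_joint_phase_marginal phase_number_joint_number_marginal
    by blast
  moreover have "trivial_observable phase_space (scalar_obs ?\<mu>)"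
    by (intro trivial_observable_scalar_obs prob_space_return zero_in_space_phase_space) simp
  moreover have "trivial_observable number_space (scalar_obs ?\<nu>)"
    by (intro trivial_observable_scalar_obs prob_space_return) simp_all
  ultimately show ?thesis
    unfolding jm_region_def using l u by (simp only: mem_Collect_eq prod.case atLeastAtMost_iff) blast
qed

section \<open>Coherent phase states\<close>

lemma cos_le_cos_of_dist:
  fixes t \<delta> :: real
  assumes "0 < \<delta>" "\<delta> \<le> pi" "\<delta> \<le> \<bar>t\<bar>" "\<bar>t\<bar> \<le> 2*pi - \<delta>"
  shows "cos t \<le> cos \<delta>"
proof -
  have "cos t = cos \<bar>t\<bar>" by (cases "t \<ge> 0") auto
  also have "\<dots> \<le> cos \<delta>"
  proof (cases "\<bar>t\<bar> \<le> pi")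
    case True
    then show ?thesis using assms by (intro cos_monotone_0_pi_le) auto
  next
    case False
    have "cos \<bar>t\<bar> = cos (2*pi - \<bar>t\<bar>)" by (simp add: cos_diff)
    also have "\<dots> \<le> cos \<delta>" using assms False by (intro cos_monotone_0_pi_le) auto
    finally show ?thesis .
  qed
  finally show ?thesis .
qed

lemma norm_cis_minus_one_sq: "(cmod (cis t - 1))\<^sup>2 = 2 - 2 * cos t"
proof -
  have "(cmod (cis t - 1))\<^sup>2 = (cos t - 1)\<^sup>2 + (sin t)\<^sup>2"
    by (simp add: cmod_power2)
  also have "\<dots> = 2 - 2 * cos t"
    using sin_cos_squared_add[of t] by (simp add: power2_eq_square algebra_simps)
  finally show ?thesis .
qed

lemma norm_geometric_sum_sq_le:
  fixes z :: complex
  assumes "cmod z = 1" "z \<noteq> 1"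
  shows "(cmod (\<Sum>n<N. z ^ n))\<^sup>2 \<le> 4 / (cmod (z - 1))\<^sup>2"
proof -
  have "cmod (z ^ N - 1) \<le> cmod (z ^ N) + cmod 1" by (rule norm_triangle_ineq4)
  then have "cmod (z ^ N - 1) \<le> 2" using assms(1) by (simp add: norm_power)
  then have "cmod (\<Sum>n<N. z ^ n) \<le> 2 / cmod (z - 1)"
    using assms(2) by (simp add: geometric_sum norm_divide divide_right_mono)
  then have "(cmod (\<Sum>n<N. z ^ n))\<^sup>2 \<le> (2 / cmod (z - 1))\<^sup>2"
    by (intro power_mono) auto
  then show ?thesis by (simp add: power_divide)
qed

definition coherent_state :: "nat \<Rightarrow> real \<Rightarrow> nat \<Rightarrow> complex" where
  "coherent_state N \<theta>0 n = cis (real n * \<theta>0) / of_real (sqrt (real N))"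

lemma coherent_state_normalized: "N > 0 \<Longrightarrow> (\<Sum>n<N. (cmod (coherent_state N \<theta>0 n))\<^sup>2) = 1"
  unfolding coherent_state_def by (simp add: norm_divide power_divide)

lemma phase_amplitude_coherent_state_le:
  assumes N: "N > 0" and c: "cos (\<theta>0 - \<theta>) \<le> cos \<delta>" and c1: "cos \<delta> < 1"
  shows "(cmod (phase_amplitude N (coherent_state N \<theta>0) \<theta>))\<^sup>2 \<le> 2 / (real N * (1 - cos \<delta>))"
proof -
  let ?z = "cis (\<theta>0 - \<theta>)"
  have "coherent_state N \<theta>0 n * cis (- (real n * \<theta>)) = ?z ^ n / of_real (sqrt (real N))" for n
  proof -
    have "?z ^ n = cis (real n * (\<theta>0 - \<theta>))" by (rule Complex.DeMoivre)
    also have "\<dots> = cis (real n * \<theta>0) * cis (- (real n * \<theta>))"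
      unfolding cis_mult by (rule arg_cong[where f=cis]) (simp add: algebra_simps)
    finally show ?thesis
      unfolding coherent_state_def by (simp only: times_divide_eq_left mult.commute[of _ "of_real _"])
  qed
  then have "phase_amplitude N (coherent_state N \<theta>0) \<theta> = (\<Sum>n<N. ?z ^ n) / of_real (sqrt (real N))"
    unfolding phase_amplitude_def sum_divide_distrib by (intro sum.cong refl)
  then have eq: "(cmod (phase_amplitude N (coherent_state N \<theta>0) \<theta>))\<^sup>2 = (cmod (\<Sum>n<N. ?z ^ n))\<^sup>2 / real N"
    by (simp add: norm_divide power_divide)
  have "?z \<noteq> 1"
    using c c1 by (metis cis.sel(1) linorder_not_less one_complex.sel(1))
  then have "(cmod (\<Sum>n<N. ?z ^ n))\<^sup>2 \<le> 4 / (2 - 2 * cos (\<theta>0 - \<theta>))"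
    using norm_geometric_sum_sq_le[of ?z N] by (simp add: norm_cis_minus_one_sq)
  also have "\<dots> \<le> 4 / (2 - 2 * cos \<delta>)"
    using c c1 by (intro divide_left_mono) auto
  also have "\<dots> = 2 / (1 - cos \<delta>)"
    using c1 by (simp add: divide_simps)
  finally have "(cmod (\<Sum>n<N. ?z ^ n))\<^sup>2 / real N \<le> 2 / (1 - cos \<delta>) / real N"
    by (rule divide_right_mono) simp
  then show ?thesis
    unfolding eq by (simp add: mult.commute)
qed

lemma coherent_state_phase_concentration:
  fixes \<delta> \<theta>0 :: real and N :: nat
  assumes \<delta>: "0 < \<delta>" "\<delta> \<le> pi" and \<theta>0: "\<delta> \<le> \<theta>0" "\<theta>0 + \<delta> \<le> 2*pi" and N: "N > 0"
  shows "1 - 2 / (real N * (1 - cos \<delta>))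
    \<le> Re (qform N (coherent_state N \<theta>0) (canonical_phase {\<theta>0-\<delta>..<\<theta>0+\<delta>}))"
proof -
  let ?X = "{\<theta>0-\<delta>..<\<theta>0+\<delta>}" and ?Y = "{0..<2*pi} - {\<theta>0-\<delta>..<\<theta>0+\<delta>}"
  let ?\<psi> = "coherent_state N \<theta>0"
  let ?C = "2 / (real N * (1 - cos \<delta>))"
  have c1: "cos \<delta> < 1" using cos_monotone_0_pi[of 0 \<delta>] \<delta> by simp
  have X: "?X \<in> sets phase_space" and Y: "?Y \<in> sets phase_space"
    using \<delta> \<theta>0 by (auto simp: sets_phase_space)
  have "?X \<union> ?Y = space phase_space"
    using \<delta> \<theta>0 by (auto simp: space_phase_space)
  then have "Re (qform N ?\<psi> (canonical_phase ?X)) + Re (qform N ?\<psi> (canonical_phase ?Y)) = 1"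
    using observable_qform_Un[OF phase_observable X Y, of N ?\<psi>]
    by (simp add: canonical_phase_space qform_idmat coherent_state_normalized[OF N])
  moreover have "Re (qform N ?\<psi> (canonical_phase ?Y)) \<le> ?C"
  proof -
    have "Re (qform N ?\<psi> (canonical_phase ?Y)) = (LINT \<theta>:?Y|lborel. phase_density N ?\<psi> \<theta>)"
      by (simp add: qform_canonical_phase[OF Y])
    also have "\<dots> \<le> (LINT \<theta>:?Y|lborel. ?C / (2*pi))"
    proof (rule set_integral_mono)
      show "set_integrable lborel ?Y (phase_density N ?\<psi>)"
        by (rule set_integrable_phase_density[OF Y])
      show "set_integrable lborel ?Y (\<lambda>_. ?C / (2*pi))"
        by (rule continuous_on_set_integrable[where a=0 and b="2*pi"]) auto
      fix \<theta> assume "\<theta> \<in> ?Y"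
      then have "cos (\<theta>0 - \<theta>) \<le> cos \<delta>"
        using \<delta> \<theta>0 by (intro cos_le_cos_of_dist) auto
      then show "phase_density N ?\<psi> \<theta> \<le> ?C / (2*pi)"
        unfolding phase_density_def
        by (intro divide_right_mono phase_amplitude_coherent_state_le[OF N _ c1]) auto
    qed
    also have "\<dots> = measure lborel ?Y * (?C / (2*pi))"
      using lborel_phase_space_finite[OF Y] by (simp add: set_integral_const)
    also have "\<dots> \<le> 2*pi * (?C / (2*pi))"
    proof -
      have "measure lborel ?Y \<le> measure lborel {0..<2*pi}"
        by (rule measure_mono_fmeasurable) (auto simp: fmeasurable_def)
      then show ?thesis using c1 by (intro mult_right_mono) auto
    qed
    also have "\<dots> = ?C" by simp
    finally show ?thesis .
  qed
  ultimately show ?thesis by linarith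
qed

section \<open>Incompatibility above the diagonal\<close>

definition phase_cell :: "nat \<Rightarrow> nat \<Rightarrow> real set" where
  "phase_cell k j = {2 * pi * real j / real k ..< 2 * pi * real (Suc j) / real k}"

lemma phase_cell_centered:
  "phase_cell k j = {(2 * real j + 1) * pi / real k - pi / real k ..< (2 * real j + 1) * pi / real k + pi / real k}"
  unfolding phase_cell_def by (simp add: diff_divide_distrib[symmetric] add_divide_distrib[symmetric] algebra_simps)

lemma sets_phase_cell:
  assumes "j < k"
  shows "phase_cell k j \<in> sets phase_space"
proof -
  have "2 * pi * real (Suc j) \<le> 2 * pi * real k"
    using assms by (intro mult_left_mono) auto
  then have "2 * pi * real (Suc j) / real k \<le> 2 * pi"
    using assms by (simp add: divide_le_eq)
  then show ?thesis
    unfolding sets_phase_space phase_cell_def by auto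
qed

lemma measure_phase_cell: "k > 0 \<Longrightarrow> measure lborel (phase_cell k j) = 2 * pi / real k"
  unfolding phase_cell_def by (simp add: field_simps)

lemma disjoint_family_phase_cell: "disjoint_family (phase_cell k)"
  unfolding disjoint_family_on_def
proof (intro ballI impI)
  have mono: "2 * pi * real (Suc i) / real k \<le> 2 * pi * real j / real k" if "i < j" for i j
    using that by (intro divide_right_mono mult_left_mono) auto
  fix i j :: nat
  assume "i \<noteq> j"
  then show "phase_cell k i \<inter> phase_cell k j = {}"
    unfolding phase_cell_def using mono[of i j] mono[of j i] by (cases "i < j") auto
qed

lemma coherent_state_phase_cell:
  assumes j: "j < k" and N: "N > 0"
  shows "1 - 2 / (1 - cos (pi / real k)) / real N
    \<le> Re (qform N (coherent_state N ((2 * real j + 1) * pi / real k)) (canonical_phase (phase_cell k j)))"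
proof -
  define \<delta> where "\<delta> = pi / real k"
  define \<theta>0 where "\<theta>0 = (2 * real j + 1) * pi / real k"
  have k: "real k > 0" using j by simp
  have \<delta>: "0 < \<delta>" "\<delta> \<le> pi"
    unfolding \<delta>_def using j by (auto simp: field_simps)
  have "(2 * real j + 2) * pi \<le> 2 * real k * pi"
    using j by (intro mult_right_mono) auto
  then have \<theta>0: "\<delta> \<le> \<theta>0" "\<theta>0 + \<delta> \<le> 2*pi"
    unfolding \<delta>_def \<theta>0_def using k by (auto simp: field_simps)
  have "phase_cell k j = {\<theta>0 - \<delta>..<\<theta>0 + \<delta>}"
    unfolding \<theta>0_def \<delta>_def by (rule phase_cell_centered)
  then show ?thesis
    using coherent_state_phase_concentration[OF \<delta> \<theta>0 N]
    unfolding \<theta>0_def \<delta>_def by (simp add: mult.commute)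
qed

lemma (in prob_space) exists_prob_le_inverse:
  assumes k: "0 < k" and disj: "disjoint_family_on A {..<k}" and A: "\<And>j. j < k \<Longrightarrow> A j \<in> events"
  shows "\<exists>j<k. prob (A j) \<le> 1 / real k"
proof (rule ccontr)
  assume "\<not> ?thesis"
  then have "(\<Sum>j<k. 1 / real k) < (\<Sum>j<k. prob (A j))"
    using k by (intro sum_strict_mono) (auto simp: not_le)
  also have "\<dots> = prob (\<Union>j<k. A j)"
    using disj A by (intro finite_measure_finite_Union[symmetric]) auto
  also have "\<dots> \<le> 1" by (rule prob_le_1)
  finally show False using k by simp
qed

lemma le_of_le_add_divide_nat:
  fixes x y D :: real
  assumes "\<And>N::nat. N > 0 \<Longrightarrow> x \<le> y + D / real N"
  shows "x \<le> y"
proof -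
  have "(\<lambda>N. y + D / real N) \<longlonglongrightarrow> y + 0"
    by (intro tendsto_intros)
  then have "x \<le> y + 0"
    by (rule LIMSEQ_le_const) (auto intro!: exI[of _ 1] assms)
  then show ?thesis by simp
qed

lemma sqrt_add_sq_le:
  fixes a p r q qx qy :: real
  assumes a: "0 \<le> a" and p: "0 \<le> p" and r: "0 \<le> r"
    and qx: "0 \<le> qx" "qx \<le> p\<^sup>2 * a" and qy: "0 \<le> qy" "qy \<le> r"
    and q: "q \<le> (sqrt qx + sqrt qy)\<^sup>2"
  shows "q \<le> a * p\<^sup>2 + sqrt a * (p\<^sup>2 + r) + r"
proof -
  have "sqrt qx \<le> p * sqrt a"
    using real_sqrt_le_mono[OF qx(2)] p by (simp add: real_sqrt_mult)
  moreover have "sqrt qy \<le> sqrt r"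
    using qy(2) by (rule real_sqrt_le_mono)
  ultimately have "(sqrt qx + sqrt qy)\<^sup>2 \<le> (p * sqrt a + sqrt r)\<^sup>2"
    using qx qy by (intro power_mono add_mono) auto
  also have "\<dots> = a * p\<^sup>2 + sqrt a * (2 * p * sqrt r) + r"
    using a r by (simp add: power2_eq_square algebra_simps)
  also have "\<dots> \<le> a * p\<^sup>2 + sqrt a * (p\<^sup>2 + r) + r"
  proof -
    have "0 \<le> (p - sqrt r)\<^sup>2" by simp
    then have "2 * p * sqrt r \<le> p\<^sup>2 + r"
      using r by (simp add: power2_eq_square algebra_simps)
    then show ?thesis using a by (simp add: mult_left_mono)
  qed
  finally show ?thesis using q by linarith
qed

locale noisy_joint_measurement =
  fixes G :: "(real \<times> nat) set \<Rightarrow> mat" and l u :: real and \<mu> :: "real measure" and \<nu> :: "nat measure"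
  assumes joint_observable: "is_observable (phase_space \<Otimes>\<^sub>M number_space) G"
    and phase_marginal: "\<And>X. X \<in> sets phase_space \<Longrightarrow> G (X \<times> UNIV) = mix l canonical_phase (scalar_obs \<mu>) X"
    and number_marginal: "\<And>Y. G (space phase_space \<times> Y) = mix u number_obs (scalar_obs \<nu>) Y"
    and prob_\<mu>: "prob_space \<mu>" and sets_\<mu>: "sets \<mu> = sets phase_space"
    and prob_\<nu>: "prob_space \<nu>" and sets_\<nu>: "sets \<nu> = sets number_space"
    and l: "0 \<le> l" "l \<le> 1" and u: "0 \<le> u" "u \<le> 1"
begin

text \<open>The common value of the diagonal entries of the phase marginal at \<open>X\<close>.\<close>

definition phase_weight :: "real set \<Rightarrow> real" where
  "phase_weight X = l * (measure lborel X / (2*pi)) + (1 - l) * measure \<mu> X"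

lemma phase_weight_nonneg: "0 \<le> phase_weight X"
  unfolding phase_weight_def using l by simp

lemma rectangle_sets: "X \<in> sets phase_space \<Longrightarrow> X \<times> S \<in> sets (phase_space \<Otimes>\<^sub>M number_space)"
  by (simp add: pair_measureI)

lemma Re_qform_phase_marginal:
  "X \<in> sets phase_space \<Longrightarrow> Re (qform K \<phi> (G (X \<times> UNIV)))
     = l * Re (qform K \<phi> (canonical_phase X)) + (1 - l) * measure \<mu> X * (\<Sum>n<K. (cmod (\<phi> n))\<^sup>2)"
  by (simp add: phase_marginal Re_qform_mix_scalar_obs)

lemma Re_qform_number_marginal:
  "Re (qform K \<phi> (G (space phase_space \<times> Y)))
     = u * (\<Sum>n\<in>{..<K} \<inter> Y. (cmod (\<phi> n))\<^sup>2) + (1 - u) * measure \<nu> Y * (\<Sum>n<K. (cmod (\<phi> n))\<^sup>2)"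
  by (simp add: number_marginal Re_qform_mix_scalar_obs qform_number_obs)

lemma diag_le_phase_weight:
  assumes X: "X \<in> sets phase_space"
  shows "Re (G (X \<times> {n}) n n) \<le> phase_weight X"
proof -
  let ?e = "\<lambda>k. if k = n then (1::complex) else 0"
  have "Re (G (X \<times> {n}) n n) = Re (qform (Suc n) ?e (G (X \<times> {n})))"
    by (simp add: qform_single)
  also have "\<dots> \<le> Re (qform (Suc n) ?e (G (X \<times> UNIV)))"
    using X by (intro observable_qform_mono[OF joint_observable] rectangle_sets) auto
  also have "\<dots> = Re (G (X \<times> UNIV) n n)"
    by (simp add: qform_single)
  also have "\<dots> = phase_weight X"
    by (simp add: phase_marginal[OF X] mix_def scalar_obs_def idmat_def canonical_phase_diag[OF X]
        phase_weight_def)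
  finally show ?thesis .
qed

lemma qform_cell_off_diagonal_le:
  assumes X: "X \<in> sets phase_space" and y: "y n = 0" "(\<Sum>k<K. (cmod (y k))\<^sup>2) \<le> 1"
  shows "Re (qform K y (G (X \<times> {n}))) \<le> (1 - u) * measure \<nu> {n}"
proof -
  have "Re (qform K y (G (X \<times> {n}))) \<le> Re (qform K y (G (space phase_space \<times> {n})))"
    using X sets.sets_into_space[OF X]
    by (intro observable_qform_mono[OF joint_observable] rectangle_sets) auto
  also have "\<dots> = (1 - u) * measure \<nu> {n} * (\<Sum>k<K. (cmod (y k))\<^sup>2)"
  proof -
    have "(\<Sum>k\<in>{..<K} \<inter> {n}. (cmod (y k))\<^sup>2) = 0"
      using y(1) by (intro sum.neutral) auto
    then show ?thesis by (simp add: Re_qform_number_marginal)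
  qed
  also have "\<dots> \<le> (1 - u) * measure \<nu> {n}"
    using y(2) u by (intro mult_left_le) auto
  finally show ?thesis .
qed

text \<open>Split \<open>\<psi>\<close> into its \<open>n\<close>-th component, controlled by the phase marginal through
  \<open>phase_weight\<close>, and the rest, on which the number marginal sees at most the noise
  \<open>(1 - u) \<nu> {n}\<close> in the cell \<open>X \<times> {n}\<close>.\<close>

lemma qform_cell_le:
  assumes X: "X \<in> sets phase_space" and n: "n < K" and \<psi>: "(\<Sum>k<K. (cmod (\<psi> k))\<^sup>2) = 1"
  shows "Re (qform K \<psi> (G (X \<times> {n})))
    \<le> phase_weight X * (cmod (\<psi> n))\<^sup>2 + sqrt (phase_weight X) * ((cmod (\<psi> n))\<^sup>2 + (1 - u) * measure \<nu> {n})
       + (1 - u) * measure \<nu> {n}"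
proof -
  let ?E = "G (X \<times> {n})"
  let ?x = "\<lambda>k. if k = n then \<psi> n else 0" and ?y = "\<lambda>k. if k = n then 0 else \<psi> k"
  have E_nonneg: "0 \<le> Re (qform K \<phi> ?E)" for \<phi>
    using X by (intro observable_qform_nonneg[OF joint_observable] rectangle_sets)
  have "Re (qform K ?x ?E) = (cmod (\<psi> n))\<^sup>2 * Re (?E n n)"
    using qform_single[OF n, of "\<psi> n" ?E] by simp
  also have "\<dots> \<le> (cmod (\<psi> n))\<^sup>2 * phase_weight X"
    using diag_le_phase_weight[OF X] by (intro mult_left_mono) auto
  finally have qx: "Re (qform K ?x ?E) \<le> (cmod (\<psi> n))\<^sup>2 * phase_weight X" .
  have "(\<Sum>k<K. (cmod (?y k))\<^sup>2) \<le> (\<Sum>k<K. (cmod (\<psi> k))\<^sup>2)"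
    by (intro sum_mono) auto
  then have qy: "Re (qform K ?y ?E) \<le> (1 - u) * measure \<nu> {n}"
    using \<psi> by (intro qform_cell_off_diagonal_le[OF X]) auto
  have "\<psi> = (\<lambda>k. ?x k + ?y k)" by auto
  then have "Re (qform K \<psi> ?E) \<le> (sqrt (Re (qform K ?x ?E)) + sqrt (Re (qform K ?y ?E)))\<^sup>2"
    using qform_triangle[OF E_nonneg, of ?x ?y] by simp
  then show ?thesis
    using u by (intro sqrt_add_sq_le[OF phase_weight_nonneg _ _ E_nonneg qx E_nonneg qy]) auto
qed

lemma qform_tail_le:
  assumes X: "X \<in> sets phase_space" and \<psi>: "(\<Sum>k<K. (cmod (\<psi> k))\<^sup>2) = 1"
  shows "Re (qform K \<psi> (G (X \<times> {K..}))) \<le> (1 - u) * measure \<nu> {K..}"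
proof -
  have "Re (qform K \<psi> (G (X \<times> {K..}))) \<le> Re (qform K \<psi> (G (space phase_space \<times> {K..})))"
    using X sets.sets_into_space[OF X]
    by (intro observable_qform_mono[OF joint_observable] rectangle_sets) auto
  also have "\<dots> = (1 - u) * measure \<nu> {K..}"
  proof -
    have "{..<K} \<inter> {K..} = {}" by auto
    then show ?thesis by (simp add: Re_qform_number_marginal \<psi>)
  qed
  finally show ?thesis .
qed

lemma measure_\<nu>_split: "(\<Sum>n<K. measure \<nu> {n}) + measure \<nu> {K..} = 1"
proof -
  interpret \<nu>: prob_space \<nu> by (rule prob_\<nu>)
  have "(\<Sum>n<K. measure \<nu> {n}) = measure \<nu> {..<K}"
    using sets_\<nu> by (intro \<nu>.finite_measure_eq_sum_singleton[symmetric]) auto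
  moreover have "measure \<nu> ({..<K} \<union> {K..}) = measure \<nu> {..<K} + measure \<nu> {K..}"
    using sets_\<nu> by (intro \<nu>.finite_measure_Union) auto
  moreover have "{..<K} \<union> {K..} = space \<nu>"
    using sets_eq_imp_space_eq[OF sets_\<nu>] by auto
  ultimately show ?thesis by (simp add: \<nu>.prob_space)
qed

lemma phase_marginal_bound:
  assumes X: "X \<in> sets phase_space" and \<psi>: "(\<Sum>k<K. (cmod (\<psi> k))\<^sup>2) = 1"
  shows "l * Re (qform K \<psi> (canonical_phase X)) \<le> phase_weight X + 2 * sqrt (phase_weight X) + (1 - u)"
proof -
  let ?a = "phase_weight X" and ?p = "\<lambda>n. (cmod (\<psi> n))\<^sup>2" and ?r = "\<lambda>n. (1 - u) * measure \<nu> {n}"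
  have "X \<times> UNIV = X \<times> {..<K} \<union> X \<times> {K..}" by auto
  then have split: "Re (qform K \<psi> (G (X \<times> UNIV)))
      = Re (qform K \<psi> (G (X \<times> {..<K}))) + Re (qform K \<psi> (G (X \<times> {K..})))"
    using X by (auto intro!: observable_qform_Un[OF joint_observable] rectangle_sets)
  have "X \<times> {..<K} = (\<Union>n<K. X \<times> {n})" by auto
  then have "Re (qform K \<psi> (G (X \<times> {..<K}))) = (\<Sum>n<K. Re (qform K \<psi> (G (X \<times> {n}))))"
    using X by (auto intro!: observable_qform_UN[OF joint_observable] rectangle_sets simp: disjoint_family_on_def)
  then have "Re (qform K \<psi> (G (X \<times> UNIV)))
      = (\<Sum>n<K. Re (qform K \<psi> (G (X \<times> {n})))) + Re (qform K \<psi> (G (X \<times> {K..})))"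
    using split by simp
  also have "\<dots> \<le> (\<Sum>n<K. ?a * ?p n + sqrt ?a * (?p n + ?r n) + ?r n) + (1 - u) * measure \<nu> {K..}"
    by (intro add_mono sum_mono qform_cell_le qform_tail_le X \<psi>) auto
  also have "\<dots> = ?a + sqrt ?a * (1 + (\<Sum>n<K. ?r n)) + (1 - u) * ((\<Sum>n<K. measure \<nu> {n}) + measure \<nu> {K..})"
    using \<psi> by (simp add: sum.distrib distrib_left flip: sum_distrib_left)
  also have "\<dots> \<le> ?a + 2 * sqrt ?a + (1 - u)"
  proof -
    have "(\<Sum>n<K. measure \<nu> {n}) \<le> 1"
      using measure_\<nu>_split[of K] measure_nonneg[of \<nu> "{K..}"] by linarith
    then have "(\<Sum>n<K. ?r n) \<le> 1"
      using u by (simp flip: sum_distrib_left) (intro mult_le_one sum_nonneg, auto)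
    then have "sqrt ?a * (1 + (\<Sum>n<K. ?r n)) \<le> sqrt ?a * 2"
      using phase_weight_nonneg by (intro mult_left_mono) auto
    then show ?thesis
      using measure_\<nu>_split[of K] by simp
  qed
  finally have "Re (qform K \<psi> (G (X \<times> UNIV))) \<le> ?a + 2 * sqrt ?a + (1 - u)" .
  moreover have "0 \<le> (1 - l) * measure \<mu> X"
    using l by simp
  ultimately show ?thesis
    using Re_qform_phase_marginal[OF X, of K \<psi>] \<psi> by simp
qed

lemma incompatibility_bound:
  assumes k: "k > 0"
  shows "l + u - 1 \<le> 1 / real k + 2 * sqrt (1 / real k)"
proof -
  obtain j where j: "j < k" and \<mu>_cell: "measure \<mu> (phase_cell k j) \<le> 1 / real k"
    using prob_space.exists_prob_le_inverse[OF prob_\<mu> k, of "phase_cell k"]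
      disjoint_family_phase_cell sets_phase_cell sets_\<mu>
    by (auto intro: disjoint_family_on_mono)
  have X: "phase_cell k j \<in> sets phase_space" by (rule sets_phase_cell[OF j])
  have weight: "phase_weight (phase_cell k j) \<le> 1 / real k"
  proof -
    have "phase_weight (phase_cell k j) = l / real k + (1 - l) * measure \<mu> (phase_cell k j)"
      unfolding phase_weight_def using k by (simp add: measure_phase_cell)
    also have "\<dots> \<le> l / real k + (1 - l) * (1 / real k)"
      using \<mu>_cell l by (intro add_left_mono mult_left_mono) auto
    finally show ?thesis using k by (simp add: field_simps)
  qed
  define D where "D = 2 / (1 - cos (pi / real k))"
  let ?b = "phase_weight (phase_cell k j) + 2 * sqrt (phase_weight (phase_cell k j)) + (1 - u)"
  have "l \<le> ?b + D / real N" if N: "N > 0" for N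
  proof -
    let ?\<psi> = "coherent_state N ((2 * real j + 1) * pi / real k)"
    have "l * (1 - D / real N) \<le> l * Re (qform N ?\<psi> (canonical_phase (phase_cell k j)))"
      using coherent_state_phase_cell[OF j N] l unfolding D_def by (intro mult_left_mono) auto
    also have "\<dots> \<le> ?b"
      by (rule phase_marginal_bound[OF X coherent_state_normalized[OF N]])
    moreover have "l * D / real N \<le> D / real N"
      using l by (intro divide_right_mono mult_left_le_one_le) (auto simp: D_def)
    ultimately show ?thesis by (simp add: algebra_simps)
  qed
  then have "l \<le> ?b"
    by (rule le_of_le_add_divide_nat)
  also have "\<dots> \<le> 1 / real k + 2 * sqrt (1 / real k) + (1 - u)"
    using weight by (intro add_mono mult_left_mono real_sqrt_le_mono) auto
  finally show ?thesis by simp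
qed

lemma sum_le_one: "l + u \<le> 1"
proof -
  have "(\<lambda>k. 1 / real k + 2 * sqrt (1 / real k)) \<longlonglongrightarrow> 0 + 2 * sqrt 0"
    by (intro tendsto_intros lim_1_over_n)
  then have "l + u - 1 \<le> 0 + 2 * sqrt 0"
    by (rule LIMSEQ_le_const) (auto intro!: exI[of _ 1] incompatibility_bound)
  then show ?thesis by simp
qed

end

lemma region_sum_le_one:
  assumes "(l, u) \<in> jm_region phase_space number_space canonical_phase number_obs"
  shows "l + u \<le> 1"
proof -
  from assms obtain T1 T2 where lu: "0 \<le> l" "l \<le> 1" "0 \<le> u" "u \<le> 1"
    and T1: "trivial_observable phase_space T1" and T2: "trivial_observable number_space T2"
    and jm: "jointly_measurable phase_space number_space (mix l canonical_phase T1) (mix u number_obs T2)"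
    unfolding jm_region_def by auto
  from T1 obtain \<mu> where \<mu>: "prob_space \<mu>" "sets \<mu> = sets phase_space"
    and T1_eq: "\<And>X. X \<in> sets phase_space \<Longrightarrow> T1 X = scalar_obs \<mu> X"
    unfolding trivial_observable_def scalar_obs_def by auto
  from T2 obtain \<nu> where \<nu>: "prob_space \<nu>" "sets \<nu> = sets number_space"
    and T2_eq: "\<And>Y. T2 Y = scalar_obs \<nu> Y"
    unfolding trivial_observable_def scalar_obs_def by auto
  from jm obtain G where G: "is_observable (phase_space \<Otimes>\<^sub>M number_space) G"
    and G1: "\<And>X. X \<in> sets phase_space \<Longrightarrow> G (X \<times> UNIV) = mix l canonical_phase T1 X"
    and G2: "\<And>Y. G (space phase_space \<times> Y) = mix u number_obs T2 Y"
    unfolding jointly_measurable_def by auto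
  have "G (X \<times> UNIV) = mix l canonical_phase (scalar_obs \<mu>) X" if "X \<in> sets phase_space" for X
    using G1[OF that] T1_eq[OF that] by (simp add: mix_def)
  moreover have "G (space phase_space \<times> Y) = mix u number_obs (scalar_obs \<nu>) Y" for Y
    using G2[of Y] T2_eq[of Y] by (simp add: mix_def)
  ultimately have "noisy_joint_measurement G l u \<mu> \<nu>"
    using G \<mu> \<nu> lu unfolding noisy_joint_measurement_def by blast
  then show ?thesis
    by (rule noisy_joint_measurement.sum_le_one)
qed

theorem theorem3:
  shows "maximally_incompatible phase_space number_space canonical_phase number_obs"
  unfolding maximally_incompatible_def
proof (intro set_eqI iffI)
  fix p :: "real \<times> real"
  obtain l u where p: "p = (l, u)" by (cases p)
  show "p \<in> {(l, u). l \<in> {0..1} \<and> u \<in> {0..1} \<and> l + u \<le> 1}"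
    if "p \<in> jm_region phase_space number_space canonical_phase number_obs"
  proof -
    have "l \<in> {0..1}" "u \<in> {0..1}"
      using that unfolding p jm_region_def by auto
    then show ?thesis
      using region_sum_le_one that unfolding p by simp
  qed
  show "p \<in> jm_region phase_space number_space canonical_phase number_obs"
    if "p \<in> {(l, u). l \<in> {0..1} \<and> u \<in> {0..1} \<and> l + u \<le> 1}"
    using that region_contains_triangle unfolding p by simp
qed

end
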